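(* Let $m\ge1$ and let $\pi$ be the right action of $G_{m,m}$ on $H_{2m+1}=\{0,1\}^{2m+1}$ described below. Then: (1) for every $k=0,\dots,m$, the subgroup $G_{m,k}=\langle a_1,\dots,a_{m+k+1}\rangle$ acts transitively on $H_{m+k+1}$; (2) each generator $a_i$, $i=1,\dots,2m+1$, acts as an involution on $H_{2m+1}$; (3) for every $v\in H_{2m+1}$ and every $i=1,\dots,2m+1$, $\pi(a_i)v$ differs from $v$ in exactly one coordinate (in particular $\pi(a_i)$ has no fixed points); (4) for any $i\ne j$, $\pi(a_ia_j)$ has no fixed points.
   Context: $G_{m,k}=\langle a_1,\dots,a_{m+k+1}\mid [a_i,a_{i+1}]=1\ (1\le i\le m),\ a_{m+j+1}^{-1}a_ja_{m+j+1}=a_{m+j}\ (1\le j\le k)\rangle$, and $G_{m,0}\subset G_{m,1}\subset\dots\subset G_{m,m}$ via the obvious inclusions on generators. Let $H_n=\{0,1\}^n$, identified with a subset of $H_{n+1}$ by appending a last coordinate $0$, and let $H_n^*\subset H_{n+1}$ be the tuples with last coordinate $1$, so $H_{n+1}=H_n\sqcup H_n^*$. Let $\beta_i$ be the map flipping the $i$-th coordinate (fixing others), and $\varphi_{k,m+k}$ the map swapping the $k$-th and $(m+k)$-th coordinates. A right action is given by a map $\pi$ with $\pi(gh)=\pi(h)\pi(g)$ (composition of permutations). Define $\pi$ inductively: on $H_{m+1}$, $\pi(a_i)=\beta_i$ for $i=1,\dots,m+1$. For $k=1,\dots,m$, having $\pi(a_1),\dots,\pi(a_{m+k})$ on $H_{m+k}$,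 set $\pi(a_{m+k+1})=\beta_{m+k+1}$ on $H_{m+k+1}$, and for $1\le j\le m+k$ set $\pi(a_j)|_{H_{m+k}^*}=\beta_{m+k+1}\circ\varphi_{k,m+k}\circ\pi(a_j)|_{H_{m+k}}\circ\varphi_{k,m+k}\circ\beta_{m+k+1}$. These rules give a well-defined right action of $G_{m,m}$ on $H_{2m+1}$, restricting to an action of $G_{m,k}$ on $H_{m+k+1}$. *)

theory Defs
  imports Main
begin

text \<open>Points of H_n = {0,1}^n are modelled as functions nat => bool whose support
  lies in {1..n} (coordinate c is v c, with True = 1). Thus H_n is literally a subset
  of H_(n+1) (last coordinate 0), and H_(n+1) - H_n are the tuples with last coordinate 1.\<close>

definition H :: "nat \<Rightarrow> (nat \<Rightarrow> bool) set" where
  "H n = {v. \<forall>c. v c \<longrightarrow> c \<in> {1..n}}"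

definition flip :: "nat \<Rightarrow> (nat \<Rightarrow> bool) \<Rightarrow> (nat \<Rightarrow> bool)" where
  "flip i v = v(i := \<not> v i)"

definition swapc :: "nat \<Rightarrow> nat \<Rightarrow> (nat \<Rightarrow> bool) \<Rightarrow> (nat \<Rightarrow> bool)" where
  "swapc a b v = v(a := v b, b := v a)"

text \<open>act m n i = pi(a_i) as a map on H_n, for m+1 <= n <= 2m+1 and 1 <= i <= n,
  following the inductive construction (n = m+k+1, so k = n-1-m and m+k = n-1).\<close>
function act :: "nat \<Rightarrow> nat \<Rightarrow> nat \<Rightarrow> (nat \<Rightarrow> bool) \<Rightarrow> (nat \<Rightarrow> bool)" where
  "act m n i v =
     (if n \<le> m + 1 then flip i v
      else if i = n then flip n v
      else if \<not> v n then act m (n - 1) i v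
      else (flip n \<circ> swapc (n - 1 - m) (n - 1) \<circ> act m (n - 1) i
              \<circ> swapc (n - 1 - m) (n - 1) \<circ> flip n) v)"
  by pat_completeness auto
termination by (relation "measure (\<lambda>(m, n, i, v). n)") auto

definition pi :: "nat \<Rightarrow> nat \<Rightarrow> (nat \<Rightarrow> bool) \<Rightarrow> (nat \<Rightarrow> bool)" where
  "pi m i = act m (2 * m + 1) i"

text \<open>Orbit relation of the subgroup generated by pi(a_i), i in I, on the set X:
  equivalence closure of v ~ pi(a_i) v (generators and their inverses).\<close>
definition orbit_rel :: "nat \<Rightarrow> nat set \<Rightarrow> (nat \<Rightarrow> bool) set \<Rightarrow> ((nat \<Rightarrow> bool) \<times> (nat \<Rightarrow> bool)) set" where
  "orbit_rel m I X = (let R = {(v, pi m i v) | v i. v \<in> X \<and> i \<in> I} in (R \<union> R\<inverse>)\<^sup>*)"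

end

theory Submission
  imports Defs
begin

text \<open>By induction along the construction, every \<open>\<pi>(a\<^sub>i)\<close> flips a single coordinate of each
  point: conjugating a coordinate flip by \<open>\<beta>\<^sub>n\<close> and a coordinate swap gives again a coordinate
  flip. The flipped coordinate is the last one exactly for \<open>a\<^sub>n\<close>, so the other generators keep
  the last coordinate, and with it the branch of the recursive definition; this makes each
  \<open>\<pi>(a\<^sub>i)\<close> a conjugate of an involution and shows that distinct generators flip distinct
  coordinates, whence \<open>\<pi>(a\<^sub>i a\<^sub>j)\<close> is fixed-point free. For transitivity, \<open>a\<^sub>n\<close> acts as \<open>\<beta>\<^sub>n\<close> on
  \<open>H\<^sub>n\<^sub>-\<^sub>1\<close>, so every point of \<open>H\<^sub>n\<close> is joined to \<open>H\<^sub>n\<^sub>-\<^sub>1\<close> and hence, inductively, to the origin.\<close>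

lemma flip_flip [simp]: "flip c (flip c v) = v"
  by (auto simp: flip_def)

lemma flip_commute: "flip c (flip d v) = flip d (flip c v)"
  by (auto simp: flip_def fun_eq_iff)

lemma flip_neq_iff: "flip c v d \<noteq> v d \<longleftrightarrow> d = c"
  by (simp add: flip_def)

lemma flip_eq_flip_iff [simp]: "flip c v = flip d v \<longleftrightarrow> c = d"
  by (metis flip_neq_iff)

lemma swapc_swapc [simp]: "swapc a b (swapc a b v) = v"
  by (auto simp: swapc_def)

lemma swapc_flip:
  "swapc a b (flip c v) = flip (if c = a then b else if c = b then a else c) (swapc a b v)"
  by (auto simp: swapc_def flip_def fun_eq_iff)

declare act.simps [simp del]

lemma act_base: "n \<le> m + 1 \<Longrightarrow> act m n i v = flip i v"
  by (simp add: act.simps)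

lemma act_top: "act m n n v = flip n v"
  by (simp add: act.simps)

lemma act_low: "\<not> n \<le> m + 1 \<Longrightarrow> i \<noteq> n \<Longrightarrow> \<not> v n \<Longrightarrow> act m n i v = act m (n - 1) i v"
  by (simp add: act.simps)

lemma act_high: "\<not> n \<le> m + 1 \<Longrightarrow> i \<noteq> n \<Longrightarrow> v n \<Longrightarrow>
  act m n i v = flip n (swapc (n - 1 - m) (n - 1) (act m (n - 1) i (swapc (n - 1 - m) (n - 1) (flip n v))))"
  by (simp add: act.simps)

lemma act_cases:
  obtains (base) "n \<le> m + 1" | (top) "\<not> n \<le> m + 1" "i = n"
    | (low) "\<not> n \<le> m + 1" "i \<noteq> n" "\<not> v n" | (high) "\<not> n \<le> m + 1" "i \<noteq> n" "v n"
  by blast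

lemma act_eq_flip:
  assumes "1 \<le> i" "i \<le> n"
  shows "\<exists>c \<in> {1..n}. act m n i v = flip c v \<and> (c = n \<longleftrightarrow> i = n)"
  using assms
proof (induction m n i v rule: act.induct)
  case (1 m n i v)
  show ?case
  proof (cases rule: act_cases [where n = n and m = m and i = i and v = v])
    case base
    then show ?thesis using "1.prems" by (auto simp: act_base)
  next
    case top
    then show ?thesis by (auto simp: act_top)
  next
    case low
    have "i \<le> n - 1" using low "1.prems" by simp
    then obtain c where c: "c \<in> {1..n - 1}" "act m (n - 1) i v = flip c v"
      using "1.IH"(1) low "1.prems"(1) by blast
    have "act m n i v = flip c v"
      using low c(2) by (simp add: act_low)
    then show ?thesis using low c(1) by (intro bexI [of _ c]) auto
  next
    case high
    define a where "a = n - 1 - m"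
    define u where "u = swapc a (n - 1) (flip n v)"
    have "i \<le> n - 1" using high "1.prems" by simp
    then obtain c where c: "c \<in> {1..n - 1}" "act m (n - 1) i u = flip c u"
      using "1.IH"(2) high "1.prems"(1) unfolding a_def u_def by blast
    define d where "d = (if c = a then n - 1 else if c = n - 1 then a else c)"
    have "act m n i v = flip n (swapc a (n - 1) (flip c u))"
      using high c(2) by (simp add: act_high a_def u_def)
    also have "\<dots> = flip d v"
      by (simp add: swapc_flip u_def d_def flip_commute [of n])
    finally show ?thesis
      using high c(1) by (intro bexI [of _ d]) (auto simp: d_def a_def)
  qed
qed

lemma act_keeps_top: "1 \<le> i \<Longrightarrow> i < n \<Longrightarrow> act m n i v n = v n"
  using act_eq_flip [of i n m v] by (auto simp: flip_def)

lemma act_involution: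
  assumes "1 \<le> i" "i \<le> n"
  shows "act m n i (act m n i v) = v"
  using assms
proof (induction m n i v rule: act.induct)
  case (1 m n i v)
  have keep: "act m n i v n = v n" if "i \<noteq> n"
    using act_keeps_top "1.prems" that by simp
  show ?case
  proof (cases rule: act_cases [where n = n and m = m and i = i and v = v])
    case low
    then show ?thesis using "1.IH"(1) "1.prems" keep by (simp add: act_low)
  next
    case high
    then show ?thesis using "1.IH"(2) "1.prems" keep by (simp add: act_high)
  qed (simp_all add: act_base act_top)
qed

lemma act_inj_index:
  assumes "act m n i v = act m n j v" "i \<in> {1..n}" "j \<in> {1..n}"
  shows "i = j"
  using assms
proof (induction m n i v arbitrary: j rule: act.induct)
  case (1 m n i v)
  have flips_top: "act m n k v = flip n v \<longleftrightarrow> k = n" if "k \<in> {1..n}" for k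
    using act_eq_flip [of k n m v] that by (auto simp: act_top)
  have same_top: "i = n \<longleftrightarrow> j = n"
    using flips_top [of i] flips_top [of j] "1.prems" by auto
  show ?case
  proof (cases rule: act_cases [where n = n and m = m and i = i and v = v])
    case base
    then show ?thesis using "1.prems" by (simp add: act_base)
  next
    case top
    then show ?thesis using same_top by simp
  next
    case low
    have j: "j \<noteq> n" using low same_top by simp
    have "act m (n - 1) i v = act m (n - 1) j v"
      using "1.prems"(1) low j by (simp add: act_low)
    moreover have "i \<in> {1..n - 1}" "j \<in> {1..n - 1}" using "1.prems"(2,3) low j by auto
    ultimately show ?thesis using "1.IH"(1) [OF low] by blast
  next
    case high
    have j: "j \<noteq> n" using high same_top by simp
    let ?u = "swapc (n - 1 - m) (n - 1) (flip n v)"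
    have "swapc (n - 1 - m) (n - 1) (flip n (act m n i v))
        = swapc (n - 1 - m) (n - 1) (flip n (act m n j v))"
      using "1.prems"(1) by simp
    then have "act m (n - 1) i ?u = act m (n - 1) j ?u"
      using high j by (simp add: act_high)
    moreover have "i \<in> {1..n - 1}" "j \<in> {1..n - 1}" using "1.prems"(2,3) high j by auto
    ultimately show ?thesis using "1.IH"(2) [OF high(1,2)] high(3) by blast
  qed
qed

lemma act_eq_flip_if_in_H: "v \<in> H i \<Longrightarrow> i \<le> n \<Longrightarrow> act m n i v = flip i v"
proof (induction n)
  case (Suc n)
  then show ?case
    by (cases rule: act_cases [where n = "Suc n" and m = m and i = i and v = v]) (auto simp: act_base act_top act_low H_def)
qed (simp add: act_base)

lemma orbit_rel_step: "v \<in> X \<Longrightarrow> i \<in> I \<Longrightarrow> (v, pi m i v) \<in> orbit_rel m I X"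
  unfolding orbit_rel_def Let_def by blast

lemma sym_orbit_rel: "sym (orbit_rel m I X)"
  unfolding orbit_rel_def Let_def by (intro sym_rtrancl sym_Un_converse)

lemma trans_orbit_rel: "trans (orbit_rel m I X)"
  unfolding orbit_rel_def Let_def by (rule trans_rtrancl)

lemma orbit_rel_mono: "I \<subseteq> J \<Longrightarrow> X \<subseteq> Y \<Longrightarrow> orbit_rel m I X \<subseteq> orbit_rel m J Y"
  unfolding orbit_rel_def Let_def by (intro rtrancl_mono) blast

lemma H_mono: "n \<le> n' \<Longrightarrow> H n \<subseteq> H n'"
  by (auto simp: H_def)

lemma orbit_rel_origin:
  "n \<le> 2 * m + 1 \<Longrightarrow> v \<in> H n \<Longrightarrow> (v, \<lambda>_. False) \<in> orbit_rel m {1..n} (H n)"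
proof (induction n arbitrary: v)
  case 0
  then have "v = (\<lambda>_. False)" by (auto simp: H_def)
  then show ?case by (simp add: orbit_rel_def)
next
  case (Suc n)
  have to_origin: "(u, \<lambda>_. False) \<in> orbit_rel m {1..Suc n} (H (Suc n))" if "u \<in> H n" for u
    using Suc.IH [OF _ that] Suc.prems(1) orbit_rel_mono [of "{1..n}" "{1..Suc n}" "H n" "H (Suc n)" m]
      H_mono [of n "Suc n"] by auto
  show ?case
  proof (cases "v (Suc n)")
    case False
    then have "v \<in> H n" using Suc.prems(2) by (auto simp: H_def le_Suc_eq)
    then show ?thesis by (rule to_origin)
  next
    case True
    define u where "u = flip (Suc n) v"
    have u: "u \<in> H n" using Suc.prems(2) True by (auto simp: H_def u_def flip_def le_Suc_eq)
    then have "pi m (Suc n) u = v"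
      unfolding pi_def using Suc.prems(1) H_mono [of n "Suc n"]
      by (subst act_eq_flip_if_in_H) (auto simp: u_def)
    then have "(u, v) \<in> orbit_rel m {1..Suc n} (H (Suc n))"
      using orbit_rel_step [of u "H (Suc n)" "Suc n"] u H_mono [of n "Suc n"] by auto
    then show ?thesis
      using to_origin [OF u] sym_orbit_rel trans_orbit_rel by (metis symD transD)
  qed
qed

theorem proposition6p1:
  fixes m :: nat
  assumes "m \<ge> 1"
  shows "(\<forall>k \<le> m. \<forall>v \<in> H (m + k + 1). \<forall>w \<in> H (m + k + 1).
            (v, w) \<in> orbit_rel m {1..m + k + 1} (H (m + k + 1)))
       \<and> (\<forall>i \<in> {1..2 * m + 1}. \<forall>v \<in> H (2 * m + 1). pi m i (pi m i v) = v)
       \<and> (\<forall>i \<in> {1..2 * m + 1}. \<forall>v \<in> H (2 * m + 1).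
            card {c \<in> {1..2 * m + 1}. pi m i v c \<noteq> v c} = 1 \<and> pi m i v \<noteq> v)
       \<and> (\<forall>i \<in> {1..2 * m + 1}. \<forall>j \<in> {1..2 * m + 1}. i \<noteq> j \<longrightarrow>
            (\<forall>v \<in> H (2 * m + 1). pi m j (pi m i v) \<noteq> v))"
proof (intro conjI ballI allI impI)
  fix k v w assume "k \<le> m" "v \<in> H (m + k + 1)" "w \<in> H (m + k + 1)"
  then have "(v, \<lambda>_. False) \<in> orbit_rel m {1..m + k + 1} (H (m + k + 1))"
    and "(\<lambda>_. False, w) \<in> orbit_rel m {1..m + k + 1} (H (m + k + 1))"
    using orbit_rel_origin [of "m + k + 1" m] symD [OF sym_orbit_rel] by auto
  then show "(v, w) \<in> orbit_rel m {1..m + k + 1} (H (m + k + 1))"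
    by (rule transD [OF trans_orbit_rel])
next
  fix i v assume "i \<in> {1..2 * m + 1}"
  then show "pi m i (pi m i v) = v" unfolding pi_def by (simp add: act_involution)
next
  fix i v assume "i \<in> {1..2 * m + 1}"
  then obtain c where c: "c \<in> {1..2 * m + 1}" "pi m i v = flip c v"
    using act_eq_flip [of i "2 * m + 1" m v] unfolding pi_def by auto
  then have "{d \<in> {1..2 * m + 1}. pi m i v d \<noteq> v d} = {c}" by (auto simp: flip_def)
  then show "card {d \<in> {1..2 * m + 1}. pi m i v d \<noteq> v d} = 1" by simp
  show "pi m i v \<noteq> v" using c(2) flip_neq_iff [of c v c] by auto
next
  fix i j v assume ij: "i \<in> {1..2 * m + 1}" "j \<in> {1..2 * m + 1}" "i \<noteq> j"
  show "pi m j (pi m i v) \<noteq> v"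
  proof
    assume "pi m j (pi m i v) = v"
    then have "pi m i v = pi m j v"
      using act_involution [of j "2 * m + 1" m "pi m i v"] ij(2) unfolding pi_def by auto
    then show False using act_inj_index ij unfolding pi_def by blast
  qed
qed

end
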